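(* Let $A\in\mathbb{R}^{m\times n}$, $y\in\mathbb{R}^m$, $\lambda>0$, and let $x^\star$ be a global minimizer of $\min_{x}\frac{1}{2\lambda}\|Ax-y\|^2+\|Lx\|_{1,2}$. Let $\beta^\star=-\frac1\lambda A^\top(Ax^\star-y)$, let $\widehat{L}=L-P_{T_z}LP_{T_x^\perp}$ be the effective lifting operator associated with $x^\star$, $\widehat{u}_{\min}=\widehat{L}(\widehat{L}^\top\widehat{L})^{-1}\beta^\star$, and let $u^\dagger\in\mathbb{R}^p$ be given by $u^\dagger_{J_t}=(\widehat{u}_{\min})_{J_t}$ if $x^\star_{G_t}=0$ and $u^\dagger_{J_t}=x^\star_{G_t}/\|x^\star_{G_t}\|$ if $x^\star_{G_t}\ne0$. Then for every $t\in\{1,\dots,N\}$, $\|u^\dagger_{J_t}\|\le\|\beta^\star_{G_t}\|/w_t$.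
   Context: Let $n,N\in\mathbb{N}$, let $G_1,\dots,G_N\subseteq\{1,\dots,n\}$ be nonempty groups, possibly overlapping, with $\bigcup_iG_i=\{1,\dots,n\}$, and weights $w_i>0$. $x_G$ is the subvector of $x$ indexed by $G$ (increasing order). Let $p=\sum_i|G_i|$, partition $\{1,\dots,p\}$ into consecutive blocks $J_i=\{\sum_{j<i}|G_j|+1,\dots,\sum_{j\le i}|G_j|\}$, and define $L\in\mathbb{R}^{p\times n}$ by $(Lx)_{J_i}=w_ix_{G_i}$; $\|z\|_{1,2}=\sum_i\|z_{J_i}\|$ (Euclidean), so $\|Lx\|_{1,2}=\sum_iw_i\|x_{G_i}\|$. For $x\in\mathbb{R}^n$: $\mathcal{I}_x=\{t:x_{G_t}\ne0\}$; $\mathcal{E}_x=\{1,\dots,n\}\setminus\bigcup_{t\notin\mathcal{I}_x}G_t$, $T_x=\{x':\mathrm{supp}(x')\subseteq\mathcal{E}_x\}$; $\mathcal{E}_z=\bigcup_{t\in\mathcal{I}_x}J_t$, $T_z=\{z':\mathrm{supp}(z')\subseteq\mathcal{E}_z\}$. $P_T$ is the orthogonal (coordinate) projection onto $T$, $T^\perp$ the orthogonal complement. $\widehat{L}^\top\widehat{L}$ is invertible. *)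

theory Defs
  imports "Jordan_Normal_Form.Matrix" "Jordan_Normal_Form.Gauss_Jordan_Elimination"
begin

text \<open>Conventions: coordinates of R^n are 0..<n, groups are indexed 0..<N
  (0-based shift of the paper's 1..n and 1..N).  A group is G i :: nat set.\<close>

definition enorm :: "real vec \<Rightarrow> real" where
  "enorm v = sqrt (v \<bullet> v)"

definition gelem :: "nat set \<Rightarrow> nat \<Rightarrow> nat" where
  "gelem S k = sorted_list_of_set S ! k"

definition subv :: "real vec \<Rightarrow> nat set \<Rightarrow> real vec" where
  "subv x S = vec (card S) (\<lambda>k. x $ gelem S k)"

definition off :: "(nat \<Rightarrow> nat set) \<Rightarrow> nat \<Rightarrow> nat" where
  "off G i = (\<Sum>j<i. card (G j))"

definition pdim :: "nat \<Rightarrow> (nat \<Rightarrow> nat set) \<Rightarrow> nat" where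
  "pdim N G = off G N"

definition Jblock :: "(nat \<Rightarrow> nat set) \<Rightarrow> nat \<Rightarrow> nat set" where
  "Jblock G i = {off G i ..< off G (Suc i)}"

definition blkidx :: "nat \<Rightarrow> (nat \<Rightarrow> nat set) \<Rightarrow> nat \<Rightarrow> nat" where
  "blkidx N G r = (THE i. i < N \<and> r \<in> Jblock G i)"

definition blk :: "(nat \<Rightarrow> nat set) \<Rightarrow> real vec \<Rightarrow> nat \<Rightarrow> real vec" where
  "blk G z i = vec (card (G i)) (\<lambda>k. z $ (off G i + k))"

text \<open>the lifting operator L in R^{p x n}: (Lx)_{J_i} = w_i x_{G_i}\<close>
definition Lop :: "nat \<Rightarrow> nat \<Rightarrow> (nat \<Rightarrow> nat set) \<Rightarrow> (nat \<Rightarrow> real) \<Rightarrow> real mat" where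
  "Lop n N G w = mat (pdim N G) n (\<lambda>(r, c).
     (let i = blkidx N G r in if c = gelem (G i) (r - off G i) then w i else 0))"

definition norm12 :: "nat \<Rightarrow> (nat \<Rightarrow> nat set) \<Rightarrow> real vec \<Rightarrow> real" where
  "norm12 N G z = (\<Sum>i<N. enorm (blk G z i))"

definition objective :: "real mat \<Rightarrow> real vec \<Rightarrow> real \<Rightarrow> nat \<Rightarrow> nat \<Rightarrow>
    (nat \<Rightarrow> nat set) \<Rightarrow> (nat \<Rightarrow> real) \<Rightarrow> real vec \<Rightarrow> real" where
  "objective A y lam n N G w x =
     1 / (2 * lam) * (enorm (A *\<^sub>v x - y))\<^sup>2 + norm12 N G (Lop n N G w *\<^sub>v x)"

definition Iset :: "nat \<Rightarrow> (nat \<Rightarrow> nat set) \<Rightarrow> real vec \<Rightarrow> nat set" where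
  "Iset N G x = {t. t < N \<and> subv x (G t) \<noteq> 0\<^sub>v (card (G t))}"

definition Eset_x :: "nat \<Rightarrow> nat \<Rightarrow> (nat \<Rightarrow> nat set) \<Rightarrow> real vec \<Rightarrow> nat set" where
  "Eset_x n N G x = {0..<n} - (\<Union>t \<in> {t. t < N \<and> t \<notin> Iset N G x}. G t)"

definition Eset_z :: "nat \<Rightarrow> (nat \<Rightarrow> nat set) \<Rightarrow> real vec \<Rightarrow> nat set" where
  "Eset_z N G x = (\<Union>t \<in> Iset N G x. Jblock G t)"

definition coord_proj :: "nat \<Rightarrow> nat set \<Rightarrow> real mat" where
  "coord_proj d S = mat d d (\<lambda>(i, j). if i = j \<and> i \<in> S then 1 else 0)"

definition P_Tx :: "nat \<Rightarrow> nat \<Rightarrow> (nat \<Rightarrow> nat set) \<Rightarrow> real vec \<Rightarrow> real mat" where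
  "P_Tx n N G x = coord_proj n (Eset_x n N G x)"

definition P_Tx_perp :: "nat \<Rightarrow> nat \<Rightarrow> (nat \<Rightarrow> nat set) \<Rightarrow> real vec \<Rightarrow> real mat" where
  "P_Tx_perp n N G x = 1\<^sub>m n - P_Tx n N G x"

definition P_Tz :: "nat \<Rightarrow> (nat \<Rightarrow> nat set) \<Rightarrow> real vec \<Rightarrow> real mat" where
  "P_Tz N G x = coord_proj (pdim N G) (Eset_z N G x)"

definition Lhat :: "nat \<Rightarrow> nat \<Rightarrow> (nat \<Rightarrow> nat set) \<Rightarrow> (nat \<Rightarrow> real) \<Rightarrow> real vec \<Rightarrow> real mat" where
  "Lhat n N G w x = Lop n N G w - P_Tz N G x * Lop n N G w * P_Tx_perp n N G x"

end

theory Submission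
  imports Defs
begin

(* Every row of L has exactly one nonzero entry, and L-hat arises from L by zeroing some of
   its entries, so the columns of L-hat are orthogonal and L-hat^T L-hat is the diagonal
   matrix D of squared column norms.
   For an inactive group t (x*_{G_t} = 0) the rows J_t of L-hat are not touched, so
   (u_min)_{J_t} = w_t (beta*_j / D_j)_{j in G_t}, and D_j >= w_t^2 gives the bound.
   For an active group the block of u-dagger is a unit vector, and stationarity of the
   objective along a coordinate j with x*_j <> 0 gives
   beta*_j = x*_j * sum_{s : j in G_s} w_s / ||x*_{G_s}||, whence
   |beta*_j| >= w_t |x*_j| / ||x*_{G_t}||, and summing squares over G_t gives ||beta*_{G_t}|| >= w_t. *)

lemma bij_betw_gelem: "finite S \<Longrightarrow> bij_betw (gelem S) {..<card S} S"
  unfolding gelem_def by (rule bij_betw_nth) (simp_all add: distinct_card)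

lemma gelem_mem: "finite S \<Longrightarrow> k < card S \<Longrightarrow> gelem S k \<in> S"
  using bij_betw_apply[OF bij_betw_gelem] by blast

lemma ex_gelem_eq: "finite S \<Longrightarrow> j \<in> S \<Longrightarrow> \<exists>k<card S. gelem S k = j"
  using bij_betw_imp_surj_on[OF bij_betw_gelem] by (metis imageE lessThan_iff)

lemma sum_gelem: "finite S \<Longrightarrow> (\<Sum>k<card S. f (gelem S k)) = (\<Sum>j\<in>S. f j)"
  by (rule sum.reindex_bij_betw[OF bij_betw_gelem])

lemma enorm_vec: "enorm (vec d f) = sqrt (\<Sum>k<d. (f k)\<^sup>2)"
  by (simp add: enorm_def scalar_prod_def power2_eq_square atLeast0LessThan)

lemma enorm_squared: "(enorm v)\<^sup>2 = (\<Sum>k<dim_vec v. (v $ k)\<^sup>2)"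
  by (simp add: enorm_def scalar_prod_def power2_eq_square atLeast0LessThan sum_nonneg)

lemma enorm_subv: "finite S \<Longrightarrow> enorm (subv v S) = sqrt (\<Sum>j\<in>S. (v $ j)\<^sup>2)"
  by (simp add: subv_def enorm_vec sum_gelem[of S "\<lambda>j. (v $ j)\<^sup>2"])

lemma sum_squares_pos_of_subv_nonzero:
  assumes "finite S" "subv x S \<noteq> 0\<^sub>v (card S)"
  shows "0 < (\<Sum>l\<in>S. (x $ l)\<^sup>2)"
proof -
  obtain k where k: "k < card S" "x $ gelem S k \<noteq> 0"
    using assms(2) by (auto simp: subv_def vec_eq_iff)
  have "(x $ gelem S k)\<^sup>2 \<le> (\<Sum>l\<in>S. (x $ l)\<^sup>2)"
    using assms(1) gelem_mem[OF assms(1) k(1)] by (intro member_le_sum) auto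
  then show ?thesis using k(2) by (smt (verit) zero_less_power2)
qed

lemma enorm_normalized_subv:
  assumes "finite S" "subv x S \<noteq> 0\<^sub>v (card S)"
  shows "enorm (vec (card S) (\<lambda>k. x $ gelem S k / enorm (subv x S))) = 1"
proof -
  define Q where "Q = (\<Sum>l\<in>S. (x $ l)\<^sup>2)"
  have "Q > 0" unfolding Q_def by (rule sum_squares_pos_of_subv_nonzero[OF assms])
  moreover have "enorm (vec (card S) (\<lambda>k. x $ gelem S k / enorm (subv x S))) = sqrt (Q / (sqrt Q)\<^sup>2)"
    using assms(1) sum_gelem[of S "\<lambda>l. (x $ l / sqrt Q)\<^sup>2"]
    by (simp add: enorm_vec enorm_subv Q_def power_divide sum_divide_distrib)
  ultimately show ?thesis by simp
qed

lemma off_Suc: "off G (Suc i) = off G i + card (G i)"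
  by (simp add: off_def)

lemma off_mono: "i \<le> j \<Longrightarrow> off G i \<le> off G j"
  unfolding off_def by (rule sum_mono2) auto

lemma off_add_less_pdim: "t < N \<Longrightarrow> k < card (G t) \<Longrightarrow> off G t + k < pdim N G"
  using off_mono[of "Suc t" N G] by (simp add: pdim_def off_Suc)

lemma off_add_mem_Jblock_iff:
  assumes "k < card (G t)"
  shows "off G t + k \<in> Jblock G s \<longleftrightarrow> s = t"
proof
  assume in_s: "off G t + k \<in> Jblock G s"
  show "s = t"
  proof (rule ccontr)
    assume "s \<noteq> t"
    then consider "Suc s \<le> t" | "Suc t \<le> s" by linarith
    then show False
    proof cases
      case 1
      then show False using in_s off_mono[of "Suc s" t G] by (simp add: Jblock_def)
    next
      case 2
      then show False using in_s assms off_mono[of "Suc t" s G] by (simp add: Jblock_def off_Suc)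
    qed
  qed
qed (use assms in \<open>simp add: Jblock_def off_Suc\<close>)

lemma blkidx_off_add: "t < N \<Longrightarrow> k < card (G t) \<Longrightarrow> blkidx N G (off G t + k) = t"
  unfolding blkidx_def by (rule the_equality) (auto simp: off_add_mem_Jblock_iff)

lemma group_subset:
  fixes G :: "nat \<Rightarrow> nat set"
  assumes "(\<Union>i\<in>{..<N}. G i) = {0..<n}" "s < N"
  shows "G s \<subseteq> {0..<n}"
  using assms by blast

lemma finite_group:
  fixes G :: "nat \<Rightarrow> nat set"
  assumes "(\<Union>i\<in>{..<N}. G i) = {0..<n}" "s < N"
  shows "finite (G s)"
  using finite_subset[OF group_subset[OF assms]] by simp

lemma mult_mat_vec_index_single_entry:
  assumes "B \<in> carrier_mat p n" "v \<in> carrier_vec n" "r < p" "g < n"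
    and row: "\<And>c. c < n \<Longrightarrow> B $$ (r, c) = (if c = g then a else 0)"
  shows "(B *\<^sub>v v) $ r = a * v $ g"
proof -
  have "(B *\<^sub>v v) $ r = (\<Sum>c\<in>{0..<n}. B $$ (r, c) * v $ c)"
    using assms by (simp add: scalar_prod_def)
  also have "\<dots> = (\<Sum>c\<in>{0..<n}. if c = g then a * v $ g else 0)"
    using row by (intro sum.cong) auto
  finally show ?thesis using assms(4) by simp
qed

lemma gram_mult_vec_index_orthogonal_columns:
  fixes B :: "'a :: comm_ring_1 mat"
  assumes B: "B \<in> carrier_mat p n" and v: "v \<in> carrier_vec n" and j: "j < n"
    and orth: "\<And>r c. r < p \<Longrightarrow> c < n \<Longrightarrow> c \<noteq> j \<Longrightarrow> B $$ (r, j) * B $$ (r, c) = 0"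
  shows "(B\<^sup>T * B *\<^sub>v v) $ j = (\<Sum>r<p. (B $$ (r, j))\<^sup>2) * v $ j"
proof (rule mult_mat_vec_index_single_entry[OF _ v j j])
  show "B\<^sup>T * B \<in> carrier_mat n n" using B by simp
  fix c assume c: "c < n"
  have "(B\<^sup>T * B) $$ (j, c) = (\<Sum>r\<in>{0..<p}. B $$ (r, j) * B $$ (r, c))"
    using B j c by (auto simp: scalar_prod_def intro!: sum.cong)
  also have "\<dots> = (if c = j then \<Sum>r<p. (B $$ (r, j))\<^sup>2 else 0)"
  proof (cases "c = j")
    case False
    then show ?thesis using orth c by (auto intro!: sum.neutral)
  qed (simp add: power2_eq_square atLeast0LessThan)
  finally show "(B\<^sup>T * B) $$ (j, c) = (if c = j then \<Sum>r<p. (B $$ (r, j))\<^sup>2 else 0)" .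
qed

lemma mat_inverse_mult_vec:
  fixes M :: "'a :: field mat"
  assumes M: "M \<in> carrier_mat n n" and inv: "invertible_mat M" and b: "b \<in> carrier_vec n"
  shows "the (mat_inverse M) *\<^sub>v b \<in> carrier_vec n" "M *\<^sub>v (the (mat_inverse M) *\<^sub>v b) = b"
proof -
  obtain B where MB: "M * B = 1\<^sub>m (dim_row M)" and BM: "B * M = 1\<^sub>m (dim_row B)"
    using inv unfolding invertible_mat_def inverts_mat_def by blast
  have "dim_col B = n" using arg_cong[OF MB, of dim_col] M by simp
  moreover have "dim_row B = n" using arg_cong[OF BM, of dim_col] M by simp
  ultimately have "B \<in> carrier_mat n n" by auto
  then have "M \<in> Units (ring_mat TYPE('a) n ())"
    using M MB BM by (auto simp: Units_def ring_mat_simps)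
  then obtain B' where "mat_inverse M = Some B'"
    using mat_inverse(1)[OF M, where b = "()"] by (cases "mat_inverse M") auto
  with mat_inverse(2)[OF M this] show "the (mat_inverse M) *\<^sub>v b \<in> carrier_vec n"
    "M *\<^sub>v (the (mat_inverse M) *\<^sub>v b) = b"
    using M b by (auto simp flip: assoc_mult_mat_vec)
qed

lemma coord_proj_carrier: "coord_proj d S \<in> carrier_mat d d"
  by (simp add: coord_proj_def)

lemma coord_proj_mult_index:
  assumes "B \<in> carrier_mat d q" "r < d" "c < q"
  shows "(coord_proj d S * B) $$ (r, c) = (if r \<in> S then B $$ (r, c) else 0)"
proof -
  have "(coord_proj d S * B) $$ (r, c) = (\<Sum>j\<in>{0..<d}. (if j = r \<and> r \<in> S then B $$ (j, c) else 0))"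
    using assms by (auto simp: scalar_prod_def coord_proj_def intro!: sum.cong)
  then show ?thesis using assms by (simp add: conj_commute)
qed

lemma mult_coord_proj_index:
  assumes "B \<in> carrier_mat q d" "r < q" "c < d"
  shows "(B * coord_proj d S) $$ (r, c) = (if c \<in> S then B $$ (r, c) else 0)"
proof -
  have "(B * coord_proj d S) $$ (r, c) = (\<Sum>j\<in>{0..<d}. (if j = c \<and> c \<in> S then B $$ (r, j) else 0))"
    using assms by (auto simp: scalar_prod_def coord_proj_def intro!: sum.cong)
  then show ?thesis using assms by (simp add: conj_commute)
qed

lemma one_minus_coord_proj: "1\<^sub>m d - coord_proj d S = coord_proj d (- S)"
  by (auto simp: coord_proj_def)

lemma Lop_carrier: "Lop n N G w \<in> carrier_mat (pdim N G) n"
  by (simp add: Lop_def)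

lemma Lop_index:
  assumes "t < N" "k < card (G t)" "c < n"
  shows "Lop n N G w $$ (off G t + k, c) = (if c = gelem (G t) k then w t else 0)"
  using assms off_add_less_pdim blkidx_off_add by (simp add: Lop_def)

lemma Lop_mult_vec_index:
  assumes cover: "(\<Union>i\<in>{..<N}. G i) = {0..<n}"
    and "t < N" "k < card (G t)" "v \<in> carrier_vec n"
  shows "(Lop n N G w *\<^sub>v v) $ (off G t + k) = w t * v $ gelem (G t) k"
proof -
  have "gelem (G t) k \<in> G t" using assms gelem_mem finite_group[OF cover] by blast
  then have "gelem (G t) k < n" using assms group_subset[OF cover] by auto
  then show ?thesis
    using assms by (intro mult_mat_vec_index_single_entry[OF Lop_carrier] off_add_less_pdim Lop_index)
qed

lemma norm12_Lop:
  assumes cover: "(\<Union>i\<in>{..<N}. G i) = {0..<n}" and w_pos: "\<forall>i<N. w i > 0"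
    and v: "v \<in> carrier_vec n"
  shows "norm12 N G (Lop n N G w *\<^sub>v v) = (\<Sum>s<N. w s * sqrt (\<Sum>l\<in>G s. (v $ l)\<^sup>2))"
  unfolding norm12_def
proof (rule sum.cong[OF refl])
  fix s assume s: "s \<in> {..<N}"
  note fin = finite_group[OF cover, of s]
  have "enorm (blk G (Lop n N G w *\<^sub>v v) s) = sqrt (\<Sum>k<card (G s). (w s * v $ gelem (G s) k)\<^sup>2)"
    using s Lop_mult_vec_index[OF cover _ _ v] by (simp add: blk_def enorm_vec)
  also have "\<dots> = sqrt ((w s)\<^sup>2 * (\<Sum>l\<in>G s. (v $ l)\<^sup>2))"
    using s fin sum_gelem[of "G s" "\<lambda>l. (w s * v $ l)\<^sup>2"]
    by (simp add: power_mult_distrib sum_distrib_left)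
  also have "\<dots> = w s * sqrt (\<Sum>l\<in>G s. (v $ l)\<^sup>2)"
    using s w_pos by (simp add: real_sqrt_mult less_imp_le)
  finally show "enorm (blk G (Lop n N G w *\<^sub>v v) s) = w s * sqrt (\<Sum>l\<in>G s. (v $ l)\<^sup>2)" .
qed

lemma objective_eq:
  assumes cover: "(\<Union>i\<in>{..<N}. G i) = {0..<n}" and w_pos: "\<forall>i<N. w i > 0"
    and "A \<in> carrier_mat m n" "y \<in> carrier_vec m" and x: "x \<in> carrier_vec n"
  shows "objective A y lam n N G w x =
     1 / (2 * lam) * (\<Sum>r<m. ((A *\<^sub>v x) $ r - y $ r)\<^sup>2) + (\<Sum>s<N. w s * sqrt (\<Sum>l\<in>G s. (x $ l)\<^sup>2))"
  using assms(3,4) by (simp add: objective_def norm12_Lop[OF cover w_pos x] enorm_squared)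

lemma DERIV_sqrt_sum_squares_coordinate:
  fixes x :: "nat \<Rightarrow> real"
  assumes "finite S" "x i \<noteq> 0"
  shows "((\<lambda>e. sqrt (\<Sum>l\<in>S. (x l + (if l = i then e else 0))\<^sup>2)) has_real_derivative
          (if i \<in> S then x i / sqrt (\<Sum>l\<in>S. (x l)\<^sup>2) else 0)) (at 0)"
proof (cases "i \<in> S")
  case False
  then have "(\<lambda>e. sqrt (\<Sum>l\<in>S. (x l + (if l = i then e else 0))\<^sup>2)) =
      (\<lambda>e. sqrt (\<Sum>l\<in>S. (x l)\<^sup>2))"
    by (intro ext arg_cong[where f = sqrt] sum.cong) auto
  then show ?thesis using False by simp
next
  case True
  define Q where "Q = (\<Sum>l\<in>S. (x l)\<^sup>2)"
  have "(x i)\<^sup>2 \<le> Q"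
    unfolding Q_def using assms(1) True by (intro member_le_sum) auto
  then have Q_pos: "Q > 0" using assms(2) by (smt (verit) zero_less_power2)
  have sum_eq: "(\<Sum>l\<in>S. (x l + (if l = i then e else 0))\<^sup>2) = Q + (2 * x i * e + e\<^sup>2)" for e
  proof -
    have "(\<Sum>l\<in>S. (x l + (if l = i then e else 0))\<^sup>2)
        = (\<Sum>l\<in>S. (x l)\<^sup>2 + (if l = i then 2 * x i * e + e\<^sup>2 else 0))"
      by (intro sum.cong) (auto simp: power2_eq_square algebra_simps)
    then show ?thesis using assms(1) True by (simp add: sum.distrib Q_def)
  qed
  have "((\<lambda>e. sqrt (Q + (2 * x i * e + e\<^sup>2))) has_real_derivative inverse (sqrt Q) * x i) (at 0)"
    using Q_pos by (auto intro!: derivative_eq_intros)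
  then show ?thesis
    unfolding sum_eq using True by (simp add: Q_def divide_inverse mult.commute)
qed

lemma objective_along_coordinate:
  fixes G :: "nat \<Rightarrow> nat set"
  assumes cover: "(\<Union>i\<in>{..<N}. G i) = {0..<n}" and w_pos: "\<forall>i<N. w i > 0"
    and A: "A \<in> carrier_mat m n" and y: "y \<in> carrier_vec m" and xs: "xs \<in> carrier_vec n"
    and i: "i < n"
  shows "objective A y lam n N G w (xs + e \<cdot>\<^sub>v unit_vec n i) =
    1 / (2 * lam) * (\<Sum>r<m. ((A *\<^sub>v xs) $ r - y $ r + e * A $$ (r, i))\<^sup>2) +
    (\<Sum>s<N. w s * sqrt (\<Sum>l\<in>G s. (xs $ l + (if l = i then e else 0))\<^sup>2))"
proof -
  define x where "x = xs + e \<cdot>\<^sub>v unit_vec n i"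
  have x: "x \<in> carrier_vec n" using xs by (simp add: x_def)
  have "(\<Sum>r<m. ((A *\<^sub>v x) $ r - y $ r)\<^sup>2) = (\<Sum>r<m. ((A *\<^sub>v xs) $ r - y $ r + e * A $$ (r, i))\<^sup>2)"
    using A xs i by (intro sum.cong) (simp_all add: x_def mult_add_distrib_mat_vec algebra_simps)
  moreover have "(\<Sum>l\<in>G s. (x $ l)\<^sup>2) = (\<Sum>l\<in>G s. (xs $ l + (if l = i then e else 0))\<^sup>2)"
    if "s < N" for s
    using xs group_subset[OF cover that] by (intro sum.cong) (auto simp: x_def unit_vec_def)
  ultimately show ?thesis
    unfolding x_def[symmetric] objective_eq[OF cover w_pos A y x] by simp
qed

lemma minimizer_coordinate_stationary:
  fixes G :: "nat \<Rightarrow> nat set"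
  assumes cover: "(\<Union>i\<in>{..<N}. G i) = {0..<n}" and w_pos: "\<forall>i<N. w i > 0"
    and A: "A \<in> carrier_mat m n" and y: "y \<in> carrier_vec m" and lam: "lam > 0"
    and xs: "xs \<in> carrier_vec n"
    and xs_min: "\<forall>x \<in> carrier_vec n. objective A y lam n N G w xs \<le> objective A y lam n N G w x"
    and i: "i < n" and xs_i: "xs $ i \<noteq> 0"
  shows "((- 1 / lam) \<cdot>\<^sub>v (A\<^sup>T *\<^sub>v (A *\<^sub>v xs - y))) $ i =
         xs $ i * (\<Sum>s<N. if i \<in> G s then w s / sqrt (\<Sum>l\<in>G s. (xs $ l)\<^sup>2) else 0)"
proof -
  define R where "R r = (A *\<^sub>v xs) $ r - y $ r" for r
  define S where "S = (\<Sum>r<m. A $$ (r, i) * R r)"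
  define P where "P = (\<Sum>s<N. w s * (if i \<in> G s then xs $ i / sqrt (\<Sum>l\<in>G s. (xs $ l)\<^sup>2) else 0))"
  define F where "F e = objective A y lam n N G w (xs + e \<cdot>\<^sub>v unit_vec n i)" for e
  have "((\<lambda>e. \<Sum>r<m. (R r + e * A $$ (r, i))\<^sup>2) has_real_derivative
      (\<Sum>r<m. 2 * (A $$ (r, i) * R r))) (at 0)"
    by (auto intro!: derivative_eq_intros)
  moreover have "((\<lambda>e. \<Sum>s<N. w s * sqrt (\<Sum>l\<in>G s. (xs $ l + (if l = i then e else 0))\<^sup>2))
      has_real_derivative P) (at 0)"
    unfolding P_def using finite_group[OF cover] xs_i
    by (intro DERIV_sum DERIV_cmult DERIV_sqrt_sum_squares_coordinate) auto
  moreover have "(\<Sum>r<m. 2 * (A $$ (r, i) * R r)) = 2 * S"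
    by (simp add: S_def sum_distrib_left)
  ultimately have F_deriv: "(F has_real_derivative 1 / (2 * lam) * (2 * S) + P) (at 0)"
    unfolding F_def objective_along_coordinate[OF cover w_pos A y xs i] R_def[symmetric]
    by (intro DERIV_add DERIV_cmult) simp_all
  have "1 / (2 * lam) * (2 * S) + P = 0"
  proof (rule DERIV_local_min[OF F_deriv, of 1])
    have "xs + 0 \<cdot>\<^sub>v unit_vec n i = xs" using xs by (intro eq_vecI) auto
    then show "\<forall>e. \<bar>0 - e\<bar> < 1 \<longrightarrow> F 0 \<le> F e"
      using xs_min xs by (simp add: F_def)
  qed simp
  then have "- 1 / lam * S = P" using lam by (simp add: field_simps)
  moreover have "((- 1 / lam) \<cdot>\<^sub>v (A\<^sup>T *\<^sub>v (A *\<^sub>v xs - y))) $ i = - 1 / lam * S"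
    using A y i by (simp add: scalar_prod_def S_def R_def atLeast0LessThan)
  moreover have "P = xs $ i * (\<Sum>s<N. if i \<in> G s then w s / sqrt (\<Sum>l\<in>G s. (xs $ l)\<^sup>2) else 0)"
    unfolding P_def sum_distrib_left by (intro sum.cong) auto
  ultimately show ?thesis by simp
qed

lemma weight_le_enorm_subv_active:
  fixes G :: "nat \<Rightarrow> nat set"
  assumes cover: "(\<Union>i\<in>{..<N}. G i) = {0..<n}" and w_pos: "\<forall>i<N. w i > 0"
    and A: "A \<in> carrier_mat m n" and y: "y \<in> carrier_vec m" and lam: "lam > 0"
    and xs: "xs \<in> carrier_vec n"
    and xs_min: "\<forall>x \<in> carrier_vec n. objective A y lam n N G w xs \<le> objective A y lam n N G w x"
    and t: "t < N" and active: "subv xs (G t) \<noteq> 0\<^sub>v (card (G t))"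
  shows "w t \<le> enorm (subv ((- 1 / lam) \<cdot>\<^sub>v (A\<^sup>T *\<^sub>v (A *\<^sub>v xs - y))) (G t))"
proof -
  define \<beta> where "\<beta> = (- 1 / lam) \<cdot>\<^sub>v (A\<^sup>T *\<^sub>v (A *\<^sub>v xs - y))"
  define Q where "Q s = (\<Sum>l\<in>G s. (xs $ l)\<^sup>2)" for s
  note fin = finite_group[OF cover t]
  have Q_pos: "Q t > 0" unfolding Q_def by (rule sum_squares_pos_of_subv_nonzero[OF fin active])
  have wt: "w t > 0" using w_pos t by simp
  have "(xs $ l)\<^sup>2 * ((w t)\<^sup>2 / Q t) \<le> (\<beta> $ l)\<^sup>2" if l: "l \<in> G t" for l
  proof (cases "xs $ l = 0")
    case False
    define C where "C = (\<Sum>s<N. if l \<in> G s then w s / sqrt (Q s) else 0)"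
    have "l < n" using group_subset[OF cover t] l by auto
    then have \<beta>_l: "\<beta> $ l = xs $ l * C"
      unfolding \<beta>_def C_def Q_def
      using minimizer_coordinate_stationary[OF cover w_pos A y lam xs xs_min _ False] by simp
    have "(if l \<in> G t then w t / sqrt (Q t) else 0) \<le> C"
      unfolding C_def using t w_pos by (intro member_le_sum) (auto simp: Q_def less_imp_le sum_nonneg)
    then have "w t / sqrt (Q t) \<le> C" using l by simp
    then have "(w t / sqrt (Q t))\<^sup>2 \<le> C\<^sup>2"
      using wt Q_pos by (intro power_mono) auto
    then have "(w t)\<^sup>2 / Q t \<le> C\<^sup>2" using Q_pos by (simp add: power_divide)
    then have "(xs $ l)\<^sup>2 * ((w t)\<^sup>2 / Q t) \<le> (xs $ l)\<^sup>2 * C\<^sup>2"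
      by (rule mult_left_mono) simp
    then show ?thesis by (simp add: \<beta>_l power_mult_distrib)
  qed simp
  then have "(\<Sum>l\<in>G t. (xs $ l)\<^sup>2 * ((w t)\<^sup>2 / Q t)) \<le> (\<Sum>l\<in>G t. (\<beta> $ l)\<^sup>2)"
    by (rule sum_mono)
  moreover have "(\<Sum>l\<in>G t. (xs $ l)\<^sup>2 * ((w t)\<^sup>2 / Q t)) = (w t)\<^sup>2"
    using Q_pos unfolding sum_distrib_right[symmetric] Q_def[symmetric] by simp
  ultimately have "(w t)\<^sup>2 \<le> (\<Sum>l\<in>G t. (\<beta> $ l)\<^sup>2)" by simp
  then have "w t \<le> sqrt (\<Sum>l\<in>G t. (\<beta> $ l)\<^sup>2)" by (rule real_le_rsqrt)
  then show ?thesis using wt fin by (simp add: enorm_subv \<beta>_def)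
qed

lemma Lhat_eq:
  "Lhat n N G w x = Lop n N G w -
     coord_proj (pdim N G) (Eset_z N G x) * Lop n N G w * coord_proj n (- Eset_x n N G x)"
  by (simp add: Lhat_def P_Tx_perp_def P_Tx_def P_Tz_def one_minus_coord_proj)

lemma Lhat_carrier: "Lhat n N G w x \<in> carrier_mat (pdim N G) n"
  unfolding Lhat_eq by (meson minus_carrier_mat mult_carrier_mat coord_proj_carrier Lop_carrier)

lemma Lhat_index:
  assumes "r < pdim N G" "c < n"
  shows "Lhat n N G w x $$ (r, c) =
    (if r \<in> Eset_z N G x \<and> c \<notin> Eset_x n N G x then 0 else Lop n N G w $$ (r, c))"
proof -
  define P where "P = coord_proj (pdim N G) (Eset_z N G x)"
  define Q where "Q = coord_proj n (- Eset_x n N G x)"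
  have PL: "P * Lop n N G w \<in> carrier_mat (pdim N G) n"
    unfolding P_def by (meson mult_carrier_mat coord_proj_carrier Lop_carrier)
  then have "P * Lop n N G w * Q \<in> carrier_mat (pdim N G) n"
    unfolding Q_def by (meson mult_carrier_mat coord_proj_carrier)
  then have "Lhat n N G w x $$ (r, c) = Lop n N G w $$ (r, c) - (P * Lop n N G w * Q) $$ (r, c)"
    using assms unfolding Lhat_eq P_def[symmetric] Q_def[symmetric]
    by (metis carrier_matD index_minus_mat(1))
  also have "(P * Lop n N G w * Q) $$ (r, c) = (if c \<notin> Eset_x n N G x then (P * Lop n N G w) $$ (r, c) else 0)"
    unfolding Q_def using assms by (simp add: mult_coord_proj_index[OF PL])
  also have "(P * Lop n N G w) $$ (r, c) = (if r \<in> Eset_z N G x then Lop n N G w $$ (r, c) else 0)"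
    unfolding P_def using assms by (simp add: coord_proj_mult_index[OF Lop_carrier])
  finally show ?thesis by auto
qed

lemma Lhat_orthogonal_columns:
  assumes "r < pdim N G" "j < n" "c < n" "c \<noteq> j"
  shows "Lhat n N G w x $$ (r, j) * Lhat n N G w x $$ (r, c) = 0"
  using assms by (simp add: Lhat_index Lop_def Let_def)

lemma Lhat_gram_mult_vec_index:
  assumes "v \<in> carrier_vec n" "j < n"
  shows "((Lhat n N G w x)\<^sup>T * Lhat n N G w x *\<^sub>v v) $ j =
    (\<Sum>r<pdim N G. (Lhat n N G w x $$ (r, j))\<^sup>2) * v $ j"
  using assms Lhat_orthogonal_columns
  by (intro gram_mult_vec_index_orthogonal_columns[OF Lhat_carrier]) auto

lemma Lhat_index_inactive:
  assumes "t < N" "subv x (G t) = 0\<^sub>v (card (G t))" "k < card (G t)" "c < n"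
  shows "Lhat n N G w x $$ (off G t + k, c) = Lop n N G w $$ (off G t + k, c)"
proof -
  have "off G t + k \<notin> Eset_z N G x"
    using assms(2,3) off_add_mem_Jblock_iff by (auto simp: Eset_z_def Iset_def)
  then show ?thesis using assms by (simp add: Lhat_index off_add_less_pdim)
qed

lemma Lhat_column_norm_ge_inactive:
  fixes G :: "nat \<Rightarrow> nat set"
  assumes cover: "(\<Union>i\<in>{..<N}. G i) = {0..<n}"
    and t: "t < N" and inactive: "subv x (G t) = 0\<^sub>v (card (G t))" and j: "j \<in> G t"
  shows "(w t)\<^sup>2 \<le> (\<Sum>r<pdim N G. (Lhat n N G w x $$ (r, j))\<^sup>2)"
proof -
  obtain k where k: "k < card (G t)" "gelem (G t) k = j"
    using ex_gelem_eq[OF finite_group[OF cover t] j] by blast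
  have "j < n" using group_subset[OF cover t] j by auto
  then have "Lhat n N G w x $$ (off G t + k, j) = w t"
    using t inactive k by (simp add: Lhat_index_inactive Lop_index)
  moreover have "(Lhat n N G w x $$ (off G t + k, j))\<^sup>2 \<le> (\<Sum>r<pdim N G. (Lhat n N G w x $$ (r, j))\<^sup>2)"
    using t k by (intro member_le_sum) (auto simp: off_add_less_pdim)
  ultimately show ?thesis by simp
qed

(* The vector u-hat_min of the paper for b = beta*: the minimum-norm solution of Lhat^T u = b. *)
definition Lhat_min_norm ::
    "nat \<Rightarrow> nat \<Rightarrow> (nat \<Rightarrow> nat set) \<Rightarrow> (nat \<Rightarrow> real) \<Rightarrow> real vec \<Rightarrow> real vec \<Rightarrow> real vec" where
  "Lhat_min_norm n N G w x b =
     Lhat n N G w x *\<^sub>v (the (mat_inverse ((Lhat n N G w x)\<^sup>T * Lhat n N G w x)) *\<^sub>v b)"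

lemma Lhat_min_norm_index_inactive:
  fixes G :: "nat \<Rightarrow> nat set"
  assumes cover: "(\<Union>i\<in>{..<N}. G i) = {0..<n}" and w_pos: "\<forall>i<N. w i > 0"
    and t: "t < N" and inactive: "subv x (G t) = 0\<^sub>v (card (G t))" and k: "k < card (G t)"
    and b: "b \<in> carrier_vec n"
    and inv: "invertible_mat ((Lhat n N G w x)\<^sup>T * Lhat n N G w x)"
  shows "\<bar>Lhat_min_norm n N G w x b $ (off G t + k)\<bar> \<le> \<bar>b $ gelem (G t) k / w t\<bar>"
proof -
  define Lh where "Lh = Lhat n N G w x"
  define z where "z = the (mat_inverse (Lh\<^sup>T * Lh)) *\<^sub>v b"
  define j where "j = gelem (G t) k"
  define D where "D = (\<Sum>r<pdim N G. (Lh $$ (r, j))\<^sup>2)"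
  have Lh: "Lh \<in> carrier_mat (pdim N G) n" by (simp add: Lh_def Lhat_carrier)
  have z: "z \<in> carrier_vec n" and normal_eq: "Lh\<^sup>T * Lh *\<^sub>v z = b"
    using mat_inverse_mult_vec[OF _ inv[folded Lh_def] b] Lh by (simp_all add: z_def)
  have wt: "w t > 0" using w_pos t by simp
  have j_mem: "j \<in> G t" unfolding j_def by (rule gelem_mem[OF finite_group[OF cover t] k])
  then have j_lt: "j < n" using group_subset[OF cover t] by auto
  have u: "Lhat_min_norm n N G w x b $ (off G t + k) = w t * z $ j"
    unfolding Lhat_min_norm_def Lh_def[symmetric] z_def[symmetric]
    using t inactive k z j_lt
    by (intro mult_mat_vec_index_single_entry[OF Lh])
      (simp_all add: Lh_def j_def off_add_less_pdim Lhat_index_inactive Lop_index)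
  have D_ge: "(w t)\<^sup>2 \<le> D"
    unfolding D_def Lh_def by (rule Lhat_column_norm_ge_inactive[OF cover t inactive j_mem])
  then have D_pos: "D > 0" using wt by (smt (verit) zero_less_power2)
  have "D * z $ j = b $ j"
    using Lhat_gram_mult_vec_index[OF z j_lt, of N G w x] normal_eq by (simp add: D_def Lh_def)
  then have "z $ j = b $ j / D" using D_pos by (simp add: field_simps)
  then have "\<bar>Lhat_min_norm n N G w x b $ (off G t + k)\<bar> = w t * \<bar>b $ j\<bar> / D"
    using u wt D_pos by (simp add: abs_mult)
  also have "\<dots> \<le> w t * \<bar>b $ j\<bar> / (w t)\<^sup>2"
    using D_ge D_pos wt by (intro divide_left_mono) auto
  also have "\<dots> = \<bar>b $ j / w t\<bar>"
    using wt by (simp add: power2_eq_square)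
  finally show ?thesis by (simp add: j_def)
qed

lemma enorm_blk_Lhat_min_norm_le_inactive:
  fixes G :: "nat \<Rightarrow> nat set"
  assumes cover: "(\<Union>i\<in>{..<N}. G i) = {0..<n}" and w_pos: "\<forall>i<N. w i > 0"
    and t: "t < N" and inactive: "subv x (G t) = 0\<^sub>v (card (G t))"
    and b: "b \<in> carrier_vec n"
    and inv: "invertible_mat ((Lhat n N G w x)\<^sup>T * Lhat n N G w x)"
  shows "enorm (blk G (Lhat_min_norm n N G w x b) t) \<le> enorm (subv b (G t)) / w t"
proof -
  have wt: "w t > 0" using w_pos t by simp
  have "enorm (blk G (Lhat_min_norm n N G w x b) t)
      = sqrt (\<Sum>k<card (G t). (Lhat_min_norm n N G w x b $ (off G t + k))\<^sup>2)"
    by (simp add: blk_def enorm_vec)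
  also have "\<dots> \<le> sqrt (\<Sum>k<card (G t). (b $ gelem (G t) k / w t)\<^sup>2)"
    using Lhat_min_norm_index_inactive[OF cover w_pos t inactive _ b inv]
    by (intro real_sqrt_le_mono sum_mono) (simp add: abs_le_square_iff del: abs_divide)
  also have "\<dots> = enorm (subv b (G t)) / w t"
    using wt finite_group[OF cover t] sum_gelem[of "G t" "\<lambda>j. (b $ j / w t)\<^sup>2"]
    by (simp add: enorm_subv power_divide sum_divide_distrib[symmetric] real_sqrt_divide)
  finally show ?thesis .
qed

theorem proposition3p7:
  fixes n N m :: nat and G :: "nat \<Rightarrow> nat set" and w :: "nat \<Rightarrow> real"
    and A :: "real mat" and y xs :: "real vec" and lam :: real
  assumes groups_nonempty: "\<forall>i<N. G i \<noteq> {}"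
    and groups_cover: "(\<Union>i\<in>{..<N}. G i) = {0..<n}"
    and weights_pos: "\<forall>i<N. w i > 0"
    and A_dim: "A \<in> carrier_mat m n"
    and y_dim: "y \<in> carrier_vec m"
    and lam_pos: "lam > 0"
    and xs_dim: "xs \<in> carrier_vec n"
    and xs_min: "\<forall>x \<in> carrier_vec n. objective A y lam n N G w xs \<le> objective A y lam n N G w x"
    and Lhat_inv: "invertible_mat ((Lhat n N G w xs)\<^sup>T * Lhat n N G w xs)"
  shows "let \<beta> = (- 1 / lam) \<cdot>\<^sub>v (A\<^sup>T *\<^sub>v (A *\<^sub>v xs - y));
             Lh = Lhat n N G w xs;
             umin = Lh *\<^sub>v (the (mat_inverse (Lh\<^sup>T * Lh)) *\<^sub>v \<beta>);
             udag = vec (pdim N G) (\<lambda>r. let t = blkidx N G r in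
                      if subv xs (G t) = 0\<^sub>v (card (G t)) then umin $ r
                      else xs $ gelem (G t) (r - off G t) / enorm (subv xs (G t)))
         in \<forall>t<N. enorm (blk G udag t) \<le> enorm (subv \<beta> (G t)) / w t"
proof -
  define \<beta> where "\<beta> = (- 1 / lam) \<cdot>\<^sub>v (A\<^sup>T *\<^sub>v (A *\<^sub>v xs - y))"
  define Lh where "Lh = Lhat n N G w xs"
  define umin where "umin = Lh *\<^sub>v (the (mat_inverse (Lh\<^sup>T * Lh)) *\<^sub>v \<beta>)"
  define udag where "udag = vec (pdim N G) (\<lambda>r. let t = blkidx N G r in
                      if subv xs (G t) = 0\<^sub>v (card (G t)) then umin $ r
                      else xs $ gelem (G t) (r - off G t) / enorm (subv xs (G t)))"
  have "enorm (blk G udag t) \<le> enorm (subv \<beta> (G t)) / w t" if t: "t < N" for t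
  proof (cases "subv xs (G t) = 0\<^sub>v (card (G t))")
    case True
    have "\<beta> \<in> carrier_vec n" using A_dim y_dim xs_dim by (simp add: \<beta>_def)
    moreover have "blk G udag t = blk G umin t"
      using t True by (auto simp: udag_def blk_def off_add_less_pdim blkidx_off_add)
    ultimately show ?thesis
      using enorm_blk_Lhat_min_norm_le_inactive[OF groups_cover weights_pos t True _ Lhat_inv]
      by (simp add: umin_def Lh_def Lhat_min_norm_def)
  next
    case False
    have "blk G udag t = vec (card (G t)) (\<lambda>k. xs $ gelem (G t) k / enorm (subv xs (G t)))"
      using t False by (auto simp: udag_def blk_def off_add_less_pdim blkidx_off_add)
    then have "enorm (blk G udag t) = 1"
      using enorm_normalized_subv[OF finite_group[OF groups_cover t] False] by simp
    moreover have "w t \<le> enorm (subv \<beta> (G t))"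
      unfolding \<beta>_def using t False
      by (rule weight_le_enorm_subv_active[OF groups_cover weights_pos A_dim y_dim lam_pos xs_dim xs_min])
    ultimately show ?thesis using weights_pos t by simp
  qed
  then show ?thesis
    unfolding Let_def \<beta>_def[symmetric] Lh_def[symmetric] umin_def[symmetric]
      udag_def[unfolded Let_def, symmetric]
    by blast
qed

end
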